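(* Let $J_3$ be the graph with vertex set $\{a,b,c,d,e,f,g,h,i,j,k\}$ whose edges are: $ab$; $ac,ad,ae,af,ag$ and $bc,bd,be,bf,bg$; $cd,de,ef,fg$; $ha,hd,he$; $ia,ie,if$; $jb,jd,je$; $kb,ke,kf$. Let $H$ be a subgraph of $J_3$ with maximum degree at most three that contains no edge incident with $a$ or $b$. Then $J_3-E(H)$ contains a copy of $K_4$, or a subgraph isomorphic to $J_1$ or to $J_2$ via an isomorphism mapping the vertices $a,b$ of $J_1$ (resp. $J_2$) to the vertices $a,b$ of $J_3$ respectively.
   Context: $J_1$ is the graph with vertex set $\{a,b,c,d,e\}$ and edge set $\{ab,ac,bc,ae,be,cd,de,ad\}$; $J_2$ is the graph with the same vertex set and edge set $\{ab,ac,bc,ae,be,cd,de,bd\}$. (In the paper, the edge $ab$ is called the handle, and the conclusion is phrased as "a subgraph isomorphic to $J_1$ or $J_2$ with handle $ab$".) *)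

theory Defs
  imports Main
begin

text \<open>Simple graphs are represented by their edge sets: an edge is a
two-element set of vertices.\<close>

datatype j3v = Va | Vb | Vc | Vd | Ve | Vf | Vg | Vh | Vi | Vj | Vk
datatype j12v = Ua | Ub | Uc | Ud | Ue

definition J3 :: "j3v set set" where
  "J3 = {{Va,Vb},
         {Va,Vc},{Va,Vd},{Va,Ve},{Va,Vf},{Va,Vg},
         {Vb,Vc},{Vb,Vd},{Vb,Ve},{Vb,Vf},{Vb,Vg},
         {Vc,Vd},{Vd,Ve},{Ve,Vf},{Vf,Vg},
         {Vh,Va},{Vh,Vd},{Vh,Ve},
         {Vi,Va},{Vi,Ve},{Vi,Vf},
         {Vj,Vb},{Vj,Vd},{Vj,Ve},
         {Vk,Vb},{Vk,Ve},{Vk,Vf}}"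

definition J1 :: "j12v set set" where
  "J1 = {{Ua,Ub},{Ua,Uc},{Ub,Uc},{Ua,Ue},{Ub,Ue},{Uc,Ud},{Ud,Ue},{Ua,Ud}}"

definition J2 :: "j12v set set" where
  "J2 = {{Ua,Ub},{Ua,Uc},{Ub,Uc},{Ua,Ue},{Ub,Ue},{Uc,Ud},{Ud,Ue},{Ub,Ud}}"

definition degree :: "'v set set \<Rightarrow> 'v \<Rightarrow> nat" where
  "degree E v = card {e \<in> E. v \<in> e}"

definition has_K4 :: "'v set set \<Rightarrow> bool" where
  "has_K4 E \<longleftrightarrow> (\<exists>S. finite S \<and> card S = 4 \<and>
      (\<forall>x\<in>S. \<forall>y\<in>S. x \<noteq> y \<longrightarrow> {x,y} \<in> E))"

definition embeds :: "('u \<Rightarrow> 'v) \<Rightarrow> 'u set set \<Rightarrow> 'v set set \<Rightarrow> bool" where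
  "embeds f P G \<longleftrightarrow> inj f \<and> (\<forall>e\<in>P. f ` e \<in> G)"

end

theory Submission
  imports Defs
begin

text \<open>Every edge of \<open>J3\<close> at \<open>a\<close> or \<open>b\<close> survives the removal of \<open>H\<close>.
  If some edge \<open>xy\<close> of the path \<open>cdefg\<close> survives as well, then \<open>a\<close>, \<open>b\<close>,
  \<open>x\<close>, \<open>y\<close> span a \<open>K4\<close>. Otherwise \<open>H\<close> contains the whole path, so the degree
  bound leaves room for at most one further edge of \<open>H\<close> at each of \<open>d\<close>, \<open>e\<close>
  and \<open>f\<close>. Each of \<open>h\<close>, \<open>i\<close>, \<open>j\<close>, \<open>k\<close> sends two edges to the path, so these
  three edges of \<open>H\<close> leave one of them with both its path edges; together
  with its two path neighbours and \<open>a\<close>, \<open>b\<close> it gives \<open>J1\<close> (for \<open>h\<close>, \<open>i\<close>,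
  adjacent to \<open>a\<close>) or \<open>J2\<close> (for \<open>j\<close>, \<open>k\<close>, adjacent to \<open>b\<close>).\<close>

lemma card_le_degree:
  assumes "finite E" and "\<forall>x\<in>X. {v, x} \<in> E"
  shows "card X \<le> degree E v"
proof -
  have "inj_on (\<lambda>x. {v, x}) X"
    by (auto intro: inj_onI simp: doubleton_eq_iff)
  then have "card X = card ((\<lambda>x. {v, x}) ` X)"
    by (simp add: card_image)
  also have "\<dots> \<le> card {e \<in> E. v \<in> e}"
    using assms by (intro card_mono) auto
  finally show ?thesis
    unfolding degree_def .
qed

lemma has_K4I:
  assumes "distinct [a, b, x, y]"
    and "{a, b} \<in> G" "{a, x} \<in> G" "{a, y} \<in> G" "{b, x} \<in> G" "{b, y} \<in> G" "{x, y} \<in> G"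
  shows "has_K4 G"
  unfolding has_K4_def
proof (intro exI[of _ "{a, b, x, y}"] conjI ballI impI)
  show "finite {a, b, x, y}" by simp
  show "card {a, b, x, y} = 4"
    using assms(1) by simp
  fix p q
  assume "p \<in> {a, b, x, y}" "q \<in> {a, b, x, y}" "p \<noteq> q"
  then show "{p, q} \<in> G"
    using assms(2-) by (auto simp: insert_commute)
qed

lemma inj_case_j12v:
  assumes "distinct [a, b, x, y, z]"
  shows "inj (case_j12v a b x y z)"
proof (rule injI)
  fix u w
  assume "case_j12v a b x y z u = case_j12v a b x y z w"
  with assms show "u = w"
    by (cases u; cases w) auto
qed

lemma embeds_J1I:
  assumes "distinct [a, b, x, y, z]"
    and "{a, b} \<in> G" "{a, x} \<in> G" "{b, x} \<in> G" "{a, z} \<in> G" "{b, z} \<in> G"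
      "{x, y} \<in> G" "{y, z} \<in> G" "{a, y} \<in> G"
  shows "\<exists>f. embeds f J1 G \<and> f Ua = a \<and> f Ub = b"
  using assms inj_case_j12v[OF assms(1)]
  by (intro exI[of _ "case_j12v a b x y z"]) (simp add: embeds_def J1_def)

lemma embeds_J2I:
  assumes "distinct [a, b, x, y, z]"
    and "{a, b} \<in> G" "{a, x} \<in> G" "{b, x} \<in> G" "{a, z} \<in> G" "{b, z} \<in> G"
      "{x, y} \<in> G" "{y, z} \<in> G" "{b, y} \<in> G"
  shows "\<exists>f. embeds f J2 G \<and> f Ua = a \<and> f Ub = b"
  using assms inj_case_j12v[OF assms(1)]
  by (intro exI[of _ "case_j12v a b x y z"]) (simp add: embeds_def J2_def)

lemma J3_K4_if_path_edge_survives: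
  assumes "\<forall>e\<in>H. Va \<notin> e \<and> Vb \<notin> e"
    and "(x, y) \<in> {(Vc, Vd), (Vd, Ve), (Ve, Vf), (Vf, Vg)}" and "{x, y} \<notin> H"
  shows "has_K4 (J3 - H)"
  using assms by (elim insertE emptyE; intro has_K4I[of Va Vb x y]) (auto simp: J3_def)

lemma J3_pendant_survives:
  assumes "finite H" and "\<forall>v. degree H v \<le> 3"
    and "{Vc, Vd} \<in> H" "{Vd, Ve} \<in> H" "{Ve, Vf} \<in> H" "{Vf, Vg} \<in> H"
  shows "{Vd, Vh} \<notin> H \<and> {Ve, Vh} \<notin> H \<or> {Ve, Vi} \<notin> H \<and> {Vf, Vi} \<notin> H \<or>
    {Vd, Vj} \<notin> H \<and> {Ve, Vj} \<notin> H \<or> {Ve, Vk} \<notin> H \<and> {Vf, Vk} \<notin> H"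
proof -
  have at_most_one_more: "\<not> ({v, p} \<in> H \<and> {v, q} \<in> H)"
    if "{x, v} \<in> H" "{v, y} \<in> H" "distinct [x, y, p, q]" for v x y p q
  proof
    assume "{v, p} \<in> H \<and> {v, q} \<in> H"
    then have "card {x, y, p, q} \<le> degree H v"
      using that assms(1) by (intro card_le_degree) (auto simp: insert_commute)
    then show False
      using that(3) assms(2)[rule_format, of v] by simp
  qed
  have "\<not> ({Vd, Vh} \<in> H \<and> {Vd, Vj} \<in> H)" "\<not> ({Vf, Vi} \<in> H \<and> {Vf, Vk} \<in> H)"
    using at_most_one_more[of Vc Vd Ve Vh Vj] at_most_one_more[of Ve Vf Vg Vi Vk] assms(3-)
    by simp_all
  moreover have "\<not> ({Ve, p} \<in> H \<and> {Ve, q} \<in> H)"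
    if "p \<in> {Vh, Vi, Vj, Vk}" "q \<in> {Vh, Vi, Vj, Vk}" "p \<noteq> q" for p q
    using at_most_one_more[of Vd Ve Vf p q] assms(4,5) that by auto
  ultimately show ?thesis
    by blast
qed

lemma J3_embeds_J1_at_pendant:
  assumes "\<forall>e\<in>H. Va \<notin> e \<and> Vb \<notin> e"
    and "(x, y, z) \<in> {(Vd, Vh, Ve), (Ve, Vi, Vf)}" and "{x, y} \<notin> H" "{z, y} \<notin> H"
  shows "\<exists>f. embeds f J1 (J3 - H) \<and> f Ua = Va \<and> f Ub = Vb"
proof -
  from assms(2) consider "x = Vd" "y = Vh" "z = Ve" | "x = Ve" "y = Vi" "z = Vf"
    by blast
  then show ?thesis
    by cases (rule embeds_J1I[of _ _ x y z];
      use assms(1,3,4) insert_commute[of z y] in \<open>force simp: J3_def doubleton_eq_iff\<close>)+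
qed

lemma J3_embeds_J2_at_pendant:
  assumes "\<forall>e\<in>H. Va \<notin> e \<and> Vb \<notin> e"
    and "(x, y, z) \<in> {(Vd, Vj, Ve), (Ve, Vk, Vf)}" and "{x, y} \<notin> H" "{z, y} \<notin> H"
  shows "\<exists>f. embeds f J2 (J3 - H) \<and> f Ua = Va \<and> f Ub = Vb"
proof -
  from assms(2) consider "x = Vd" "y = Vj" "z = Ve" | "x = Ve" "y = Vk" "z = Vf"
    by blast
  then show ?thesis
    by cases (rule embeds_J2I[of _ _ x y z];
      use assms(1,3,4) insert_commute[of z y] in \<open>force simp: J3_def doubleton_eq_iff\<close>)+
qed

theorem lemma3:
  fixes H :: "j3v set set"
  assumes "H \<subseteq> J3"
    and "\<forall>v. degree H v \<le> 3"
    and "\<forall>e\<in>H. Va \<notin> e \<and> Vb \<notin> e"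
  shows "has_K4 (J3 - H) \<or>
         (\<exists>f. embeds f J1 (J3 - H) \<and> f Ua = Va \<and> f Ub = Vb) \<or>
         (\<exists>f. embeds f J2 (J3 - H) \<and> f Ua = Va \<and> f Ub = Vb)"
proof (cases "{Vc, Vd} \<in> H \<and> {Vd, Ve} \<in> H \<and> {Ve, Vf} \<in> H \<and> {Vf, Vg} \<in> H")
  case True
  have "finite H"
    using assms(1) by (rule finite_subset) (simp add: J3_def)
  then have "{Vd, Vh} \<notin> H \<and> {Ve, Vh} \<notin> H \<or> {Ve, Vi} \<notin> H \<and> {Vf, Vi} \<notin> H \<or>
    {Vd, Vj} \<notin> H \<and> {Ve, Vj} \<notin> H \<or> {Ve, Vk} \<notin> H \<and> {Vf, Vk} \<notin> H"
    using True assms(2) by (intro J3_pendant_survives) auto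
  then show ?thesis
    using J3_embeds_J1_at_pendant[OF assms(3), of Vd Vh Ve]
      J3_embeds_J1_at_pendant[OF assms(3), of Ve Vi Vf]
      J3_embeds_J2_at_pendant[OF assms(3), of Vd Vj Ve]
      J3_embeds_J2_at_pendant[OF assms(3), of Ve Vk Vf]
    by auto
next
  case False
  then show ?thesis
    using J3_K4_if_path_edge_survives[OF assms(3)] by blast
qed

end
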